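(* Let $\tau>0$, let $\Gamma^0$ be a closed polyhedral surface with $\boldsymbol X^0\in[\mathbb K^0]^3$ the identity and $\mathcal H^0\in\mathbb K^0$ given. Suppose that for each $m\ge0$, $(\boldsymbol X^{m+1},V^{m+1},\mathcal H^{m+1})\in[\mathbb K^m]^3\times\mathbb K^m\times\mathbb K^m$ satisfies $$\Big(\tfrac{\boldsymbol X^{m+1}-\boldsymbol X^m}{\tau}\cdot\boldsymbol n^m,\phi^h\Big)^h_{\Gamma^m}=(V^{m+1},\phi^h)^h_{\Gamma^m}\quad\forall\phi^h\in\mathbb K^m,$$ $$(V^{m+1}\boldsymbol n^m,\boldsymbol\omega^h)^h_{\Gamma^m}=\Big\langle\mathcal H^{m+1}\mathbf A^m-\boldsymbol n^m(\nabla_\Gamma\mathcal H^{m+1})^T-\tfrac12(\mathcal H^{m+1})^2\nabla_\Gamma\boldsymbol X^{m+1},\nabla_\Gamma\boldsymbol\omega^h\Big\rangle^h_{\Gamma^m}\quad\forall\boldsymbol\omega^h\in[\mathbb K^m]^3,$$ $$(\mathcal H^{m+1}-\mathcal H^m,\varphi^h)^h_{\Gamma^m}=\big\langle\nabla_\Gamma(\boldsymbol X^{m+1}-\boldsymbol X^m),\boldsymbol n^m(\nabla_\Gamma\varphi^h)^T-\varphi^h\mathbf A^m\big\rangle^h_{\Gamma^m}\quad\forall\varphi^h\in\mathbb K^m,$$ and $\Gamma^{m+1}:=\boldsymbol X^{m+1}(\Gamma^m)$ is again a polyhedral surface with nondegenerate triangles. Then for every $\tau>0$ the discrete Willmore energy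 $W^m:=\frac12(\mathcal H^m,\mathcal H^m)^h_{\Gamma^m}$ satisfies $$W^{m+1}\le W^m\le W^0=\tfrac12(\mathcal H^0,\mathcal H^0)^h_{\Gamma^0}\qquad\forall m\ge0.$$
   Context: Polyhedral setting: $\Gamma^m=\bigcup_{j=1}^J\overline{\sigma_j^m}\subset\mathbb R^3$ is a closed polyhedral surface made of nonoverlapping nondegenerate triangles $\sigma_j^m$ with vertices $\boldsymbol q^m_{j_1},\boldsymbol q^m_{j_2},\boldsymbol q^m_{j_3}$, ordered so that $\mathcal J\{\sigma_j^m\}=(\boldsymbol q^m_{j_2}-\boldsymbol q^m_{j_1})\times(\boldsymbol q^m_{j_3}-\boldsymbol q^m_{j_1})$ points outward; $|\sigma_j^m|=\frac12|\mathcal J\{\sigma_j^m\}|$, and $\boldsymbol n^m|_{\sigma_j^m}=\mathcal J\{\sigma_j^m\}/|\mathcal J\{\sigma_j^m\}|$ (piecewise constant outward normal). $\mathbb K^m$ is the space of continuous functions on $\Gamma^m$ that are affine on each triangle. $\boldsymbol X^m\in[\mathbb K^m]^3$ is the identity on $\Gamma^m$; $\boldsymbol X^{m+1}\in[\mathbb K^m]^3$ parameterizes $\Gamma^{m+1}$ with triangles $\sigma_j^{m+1}=\boldsymbol X^{m+1}(\sigma_j^m)$ (same connectivity), so functions in $\mathbb K^m$ and $\mathbb K^{m+1}$ are identified through their vertex values. Discrete surface gradient on $\Gamma^m$: for a function $f$ with vertex values (equivalently its piecewise linear interpolant), on a triangle $\sigma=\{\boldsymbol q_1,\boldsymbol q_2,\boldsymbol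 q_3\}$ with normal $\boldsymbol n$, $$\nabla_\Gamma f|_\sigma=\frac{f(\boldsymbol q_1)(\boldsymbol q_2-\boldsymbol q_3)\times\boldsymbol n+f(\boldsymbol q_2)(\boldsymbol q_3-\boldsymbol q_1)\times\boldsymbol n+f(\boldsymbol q_3)(\boldsymbol q_1-\boldsymbol q_2)\times\boldsymbol n}{|\mathcal J\{\sigma\}|};$$ for vector functions $\nabla_\Gamma\boldsymbol f$ is the matrix with $i$-th row $(\nabla_\Gamma f_i)^T$. $\mathbf A^m=\nabla_\Gamma\boldsymbol w^m$ where $\boldsymbol w^m\in[\mathbb K^m]^3$ is a given (vertex unit normal) field. Mass-lumped inner products: for scalar/vector functions $u,v$ that are continuous on each closed triangle, $$(u,v)^h_{\Gamma^m}=\tfrac13\sum_{j=1}^J\sum_{k=1}^3|\sigma_j^m|\,u((\boldsymbol q^m_{j_k})^-)\cdot v((\boldsymbol q^m_{j_k})^-),$$ and for matrix functions $\langle\boldsymbol U,\boldsymbol V\rangle^h_{\Gamma^m}=\tfrac13\sum_j\sum_k|\sigma_j^m|\,\boldsymbol U((\boldsymbol q^m_{j_k})^-):\boldsymbol V((\boldsymbol q^m_{j_k})^-)$, where $g((\boldsymbol q)^-)$ is the limit of $g$ at vertex $\boldsymbol q$ from within $\sigma_j^m$, and $\boldsymbol U:\boldsymbol V=\mathrm{Tr}(\boldsymbol U^T\boldsymbol V)$. *)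

theory Defs
  imports "HOL-Analysis.Analysis"
begin

text \<open>
  A polyhedral surface with fixed connectivity is given by
  N vertices with positions P :: nat => real^3 (vertex index i < N),
  J triangles, and a connectivity map T :: nat => nat => nat, where
  T j k (j < J, k < 3) is the index of the (k+1)-th vertex of triangle j
  (k = 0,1,2 corresponds to q_{j_1}, q_{j_2}, q_{j_3}).
  Functions in the piecewise linear space K^m are identified with their
  vertex values (nat => real), vector functions with nat => real^3.
\<close>

definition tri_vert :: "(nat \<Rightarrow> real^3) \<Rightarrow> (nat \<Rightarrow> nat \<Rightarrow> nat) \<Rightarrow> nat \<Rightarrow> nat \<Rightarrow> real^3" where
  "tri_vert P T j k = P (T j k)"

definition tri_jac :: "(nat \<Rightarrow> real^3) \<Rightarrow> (nat \<Rightarrow> nat \<Rightarrow> nat) \<Rightarrow> nat \<Rightarrow> real^3" where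
  "tri_jac P T j = cross3 (tri_vert P T j 1 - tri_vert P T j 0) (tri_vert P T j 2 - tri_vert P T j 0)"

definition tri_area :: "(nat \<Rightarrow> real^3) \<Rightarrow> (nat \<Rightarrow> nat \<Rightarrow> nat) \<Rightarrow> nat \<Rightarrow> real" where
  "tri_area P T j = norm (tri_jac P T j) / 2"

definition tri_normal :: "(nat \<Rightarrow> real^3) \<Rightarrow> (nat \<Rightarrow> nat \<Rightarrow> nat) \<Rightarrow> nat \<Rightarrow> real^3" where
  "tri_normal P T j = (1 / norm (tri_jac P T j)) *\<^sub>R tri_jac P T j"

definition sgrad :: "(nat \<Rightarrow> real^3) \<Rightarrow> (nat \<Rightarrow> nat \<Rightarrow> nat) \<Rightarrow> nat \<Rightarrow> (nat \<Rightarrow> real) \<Rightarrow> real^3" where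
  "sgrad P T j f =
     (1 / norm (tri_jac P T j)) *\<^sub>R
       (f (T j 0) *\<^sub>R cross3 (tri_vert P T j 1 - tri_vert P T j 2) (tri_normal P T j)
      + f (T j 1) *\<^sub>R cross3 (tri_vert P T j 2 - tri_vert P T j 0) (tri_normal P T j)
      + f (T j 2) *\<^sub>R cross3 (tri_vert P T j 0 - tri_vert P T j 1) (tri_normal P T j))"

definition vgrad :: "(nat \<Rightarrow> real^3) \<Rightarrow> (nat \<Rightarrow> nat \<Rightarrow> nat) \<Rightarrow> nat \<Rightarrow> (nat \<Rightarrow> real^3) \<Rightarrow> real^3^3" where
  "vgrad P T j F = (\<chi> i. sgrad P T j (\<lambda>v. F v $ i))"

definition outer :: "real^3 \<Rightarrow> real^3 \<Rightarrow> real^3^3" where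
  "outer a b = (\<chi> i l. a $ i * b $ l)"

definition frob :: "real^3^3 \<Rightarrow> real^3^3 \<Rightarrow> real" where
  "frob U V = trace (transpose U ** V)"

text \<open>Mass-lumped inner products.  Arguments are given as functions of (j,k):
  the value at vertex q_{j_k} taken from within triangle sigma_j.\<close>
definition ip_s :: "(nat \<Rightarrow> real^3) \<Rightarrow> (nat \<Rightarrow> nat \<Rightarrow> nat) \<Rightarrow> nat \<Rightarrow>
    (nat \<Rightarrow> nat \<Rightarrow> real) \<Rightarrow> (nat \<Rightarrow> nat \<Rightarrow> real) \<Rightarrow> real" where
  "ip_s P T J u v = (1/3) * (\<Sum>j<J. \<Sum>k<3. tri_area P T j * (u j k * v j k))"

definition ip_v :: "(nat \<Rightarrow> real^3) \<Rightarrow> (nat \<Rightarrow> nat \<Rightarrow> nat) \<Rightarrow> nat \<Rightarrow>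
    (nat \<Rightarrow> nat \<Rightarrow> real^3) \<Rightarrow> (nat \<Rightarrow> nat \<Rightarrow> real^3) \<Rightarrow> real" where
  "ip_v P T J u v = (1/3) * (\<Sum>j<J. \<Sum>k<3. tri_area P T j * (u j k \<bullet> v j k))"

definition ip_m :: "(nat \<Rightarrow> real^3) \<Rightarrow> (nat \<Rightarrow> nat \<Rightarrow> nat) \<Rightarrow> nat \<Rightarrow>
    (nat \<Rightarrow> nat \<Rightarrow> real^3^3) \<Rightarrow> (nat \<Rightarrow> nat \<Rightarrow> real^3^3) \<Rightarrow> real" where
  "ip_m P T J U V = (1/3) * (\<Sum>j<J. \<Sum>k<3. tri_area P T j * frob (U j k) (V j k))"

definition polyhedral_surface :: "nat \<Rightarrow> nat \<Rightarrow> (nat \<Rightarrow> nat \<Rightarrow> nat) \<Rightarrow> (nat \<Rightarrow> real^3) \<Rightarrow> bool" where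
  "polyhedral_surface N J T P \<longleftrightarrow>
     0 < J \<and>
     (\<forall>j<J. \<forall>k<3. T j k < N) \<and>
     inj_on P {..<N} \<and>
     (\<forall>j<J. tri_jac P T j \<noteq> 0) \<and>
     (\<forall>j<J. \<forall>j'<J. j \<noteq> j' \<longrightarrow>
        rel_interior (convex hull {tri_vert P T j 0, tri_vert P T j 1, tri_vert P T j 2}) \<inter>
        rel_interior (convex hull {tri_vert P T j' 0, tri_vert P T j' 1, tri_vert P T j' 2}) = {})"

text \<open>Closed and outward oriented: every directed edge of a triangle occurs
  reversed in exactly one other triangle (closed, consistently oriented), and
  the enclosed signed volume is positive (orientation outward).\<close>
definition closed_oriented :: "nat \<Rightarrow> (nat \<Rightarrow> nat \<Rightarrow> nat) \<Rightarrow> (nat \<Rightarrow> real^3) \<Rightarrow> bool" where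
  "closed_oriented J T P \<longleftrightarrow>
     (\<forall>j<J. \<forall>k<3. \<exists>!(j',k'). j' < J \<and> k' < 3 \<and>
         T j' k' = T j ((k + 1) mod 3) \<and> T j' ((k' + 1) mod 3) = T j k) \<and>
     (\<Sum>j<J. tri_vert P T j 0 \<bullet> cross3 (tri_vert P T j 1) (tri_vert P T j 2)) > 0"

definition closed_polyhedral_surface :: "nat \<Rightarrow> nat \<Rightarrow> (nat \<Rightarrow> nat \<Rightarrow> nat) \<Rightarrow> (nat \<Rightarrow> real^3) \<Rightarrow> bool" where
  "closed_polyhedral_surface N J T P \<longleftrightarrow> polyhedral_surface N J T P \<and> closed_oriented J T P"

definition willmore :: "(nat \<Rightarrow> real^3) \<Rightarrow> (nat \<Rightarrow> nat \<Rightarrow> nat) \<Rightarrow> nat \<Rightarrow> (nat \<Rightarrow> real) \<Rightarrow> real" where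
  "willmore P T J H = (1/2) * ip_s P T J (\<lambda>j k. H (T j k)) (\<lambda>j k. H (T j k))"

end

theory Submission
  imports Defs
begin

(* Test the three equations of step m with V^{m+1}, X^{m+1} - X^m and H^{m+1} and add them:
   all terms containing A^m or the gradient of H^{m+1} cancel, leaving
     tau (V,V) + (H^{m+1} - H^m, H^{m+1}) = -1/2 < (H^{m+1})^2, grad X^{m+1} : grad (X^{m+1} - X^m) >.
   On each triangle, |sigma^{m+1}| <= |sigma^m| |grad X^{m+1}|^2 / 2 (AM-GM for the singular values
   of the tangential gradient), and since |grad X^m|^2 = 2 this is at most
   |sigma^m| (1 + grad X^{m+1} : grad (X^{m+1} - X^m)). Together with h'^2 - h^2 <= 2 (h' - h) h'
   this gives W^{m+1} - W^m <= -tau (V,V) <= 0. *)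

lemma frob_eq_sum: "frob U V = (\<Sum>i\<in>UNIV. \<Sum>l\<in>UNIV. U$i$l * V$i$l)"
proof -
  have "frob U V = (\<Sum>l\<in>UNIV. \<Sum>i\<in>UNIV. U$i$l * V$i$l)"
    unfolding frob_def trace_def matrix_matrix_mult_def transpose_def by simp
  also have "\<dots> = (\<Sum>i\<in>UNIV. \<Sum>l\<in>UNIV. U$i$l * V$i$l)" by (rule sum.swap)
  finally show ?thesis .
qed

lemma frob_commute: "frob U V = frob V U"
  unfolding frob_eq_sum by (simp add: mult.commute)

lemma frob_self_nonneg: "0 \<le> frob U U"
  unfolding frob_eq_sum by (intro sum_nonneg) simp

lemma frob_diff_left: "frob (U - W) V = frob U V - frob W V"
  unfolding frob_eq_sum by (simp add: left_diff_distrib sum_subtractf)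

lemma frob_diff_right: "frob U (V - W) = frob U V - frob U W"
  by (metis frob_commute frob_diff_left)

lemma frob_minus_right: "frob U (- V) = - frob U V"
  unfolding frob_eq_sum by (simp add: sum_negf)

lemma frob_scaleR_left: "frob (c *\<^sub>R U) V = c * frob U V"
  unfolding frob_eq_sum by (simp add: sum_distrib_left mult.assoc)

lemma frob_scaleR_right: "frob U (c *\<^sub>R V) = c * frob U V"
  by (metis frob_commute frob_scaleR_left)

lemma frob_outer_outer: "frob (outer a b) (outer c d) = (a \<bullet> c) * (b \<bullet> d)"
proof -
  have "frob (outer a b) (outer c d) = (\<Sum>i\<in>UNIV. \<Sum>l\<in>UNIV. (a$i * c$i) * (b$l * d$l))"
    unfolding frob_eq_sum outer_def by (simp add: mult_ac)
  also have "\<dots> = (a \<bullet> c) * (b \<bullet> d)"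
    unfolding inner_vec_def sum_product by simp
  finally show ?thesis .
qed

lemma inner_cross3_cross3:
  "cross3 a c \<bullet> cross3 b d = (a \<bullet> b) * (c \<bullet> d) - (a \<bullet> d) * (c \<bullet> b)"
  by (simp add: cross3_simps)

definition tri_edge :: "(nat \<Rightarrow> real^3) \<Rightarrow> (nat \<Rightarrow> nat \<Rightarrow> nat) \<Rightarrow> nat \<Rightarrow> nat \<Rightarrow> real^3" where
  "tri_edge P T j k = tri_vert P T j k - tri_vert P T j 0"

lemma tri_jac_eq_cross3_edges: "tri_jac P T j = cross3 (tri_edge P T j 1) (tri_edge P T j 2)"
  unfolding tri_jac_def tri_edge_def ..

lemma norm_tri_jac_sq:
  "(norm (tri_jac P T j))\<^sup>2 = (tri_edge P T j 1 \<bullet> tri_edge P T j 1) * (tri_edge P T j 2 \<bullet> tri_edge P T j 2)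
    - (tri_edge P T j 1 \<bullet> tri_edge P T j 2)\<^sup>2"
  using norm_cross_dot[of "tri_edge P T j 1" "tri_edge P T j 2"] unfolding tri_jac_eq_cross3_edges
  by (simp add: power_mult_distrib power2_norm_eq_inner)

lemma cross3_barycentric_sum:
  fixes q0 q1 q2 n :: "real^3"
  shows "f0 *\<^sub>R cross3 (q1 - q2) n + f1 *\<^sub>R cross3 (q2 - q0) n + f2 *\<^sub>R cross3 (q0 - q1) n
     = (f1 - f0) *\<^sub>R cross3 (q2 - q0) n - (f2 - f0) *\<^sub>R cross3 (q1 - q0) n"
proof -
  have "q1 - q2 = (q1 - q0) - (q2 - q0)" and "q0 - q1 = - (q1 - q0)" by simp_all
  then show ?thesis by (simp add: Cross3.left_diff_distrib algebra_simps)
qed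

lemma vgrad_eq_edges:
  "vgrad P T j F = (1 / norm (tri_jac P T j)) *\<^sub>R
     (outer (tri_edge F T j 1) (cross3 (tri_edge P T j 2) (tri_normal P T j))
    - outer (tri_edge F T j 2) (cross3 (tri_edge P T j 1) (tri_normal P T j)))"
  unfolding vgrad_def sgrad_def cross3_barycentric_sum outer_def tri_edge_def tri_vert_def
  by (simp add: vec_eq_iff algebra_simps)

lemma vgrad_diff: "vgrad P T j (\<lambda>i. F i - F' i) = vgrad P T j F - vgrad P T j F'"
  unfolding vgrad_eq_edges tri_edge_def tri_vert_def
  by (simp add: outer_def vec_eq_iff algebra_simps)

lemma frob_vgrad_vgrad:
  assumes "tri_jac P T j \<noteq> 0"
  defines "a \<equiv> tri_edge P T j 1" and "b \<equiv> tri_edge P T j 2"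
  shows "(norm (tri_jac P T j))\<^sup>2 * frob (vgrad P T j F) (vgrad P T j F') =
      (tri_edge F T j 1 \<bullet> tri_edge F' T j 1) * (b \<bullet> b)
    - (tri_edge F T j 1 \<bullet> tri_edge F' T j 2) * (a \<bullet> b)
    - (tri_edge F T j 2 \<bullet> tri_edge F' T j 1) * (a \<bullet> b)
    + (tri_edge F T j 2 \<bullet> tri_edge F' T j 2) * (a \<bullet> a)"
proof -
  define n where "n = tri_normal P T j"
  have n_eq: "n = (1 / norm (cross3 a b)) *\<^sub>R cross3 a b"
    unfolding n_def tri_normal_def tri_jac_eq_cross3_edges a_def b_def ..
  have "n \<bullet> n = 1"
    using assms(1) unfolding n_eq tri_jac_eq_cross3_edges a_def b_def
    by (simp add: power2_norm_eq_inner[symmetric] power2_eq_square)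
  moreover have "n \<bullet> a = 0" "n \<bullet> b = 0"
    unfolding n_eq by (simp_all add: dot_cross_self)
  ultimately have "cross3 a n \<bullet> cross3 a n = a \<bullet> a" "cross3 b n \<bullet> cross3 b n = b \<bullet> b"
      "cross3 a n \<bullet> cross3 b n = a \<bullet> b" "cross3 b n \<bullet> cross3 a n = a \<bullet> b"
    by (simp_all add: inner_cross3_cross3 inner_commute)
  then show ?thesis
    using assms(1)
    unfolding vgrad_eq_edges frob_scaleR_left frob_scaleR_right frob_diff_left frob_diff_right
      frob_outer_outer a_def b_def n_def
    by (simp add: inner_commute power2_eq_square field_simps)
qed

(* The gradient of the identity is the tangential projection I - n n^T; its squared norm is its rank. *)
lemma frob_vgrad_identity:
  assumes "tri_jac P T j \<noteq> 0"
  shows "frob (vgrad P T j P) (vgrad P T j P) = 2"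
proof -
  have "(norm (tri_jac P T j))\<^sup>2 * frob (vgrad P T j P) (vgrad P T j P)
      = (norm (tri_jac P T j))\<^sup>2 * 2"
    unfolding frob_vgrad_vgrad[OF assms] unfolding norm_tri_jac_sq
    by (simp add: inner_commute algebra_simps power2_eq_square)
  then show ?thesis using assms by simp
qed

(* For M = [alpha gamma; gamma beta] positive semidefinite with alpha > 0 and any N = [x z; z y]:
   4 det M det N <= tr (adj M N)^2. *)
lemma mixed_discriminant_le:
  fixes \<alpha> \<beta> \<gamma> x y z :: real
  assumes "\<alpha> > 0" "\<gamma>\<^sup>2 \<le> \<alpha> * \<beta>"
  shows "4 * (\<alpha> * \<beta> - \<gamma>\<^sup>2) * (x * y - z\<^sup>2) \<le> (x * \<beta> + y * \<alpha> - 2 * z * \<gamma>)\<^sup>2"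
proof -
  define u where "u = \<alpha> * \<beta> - \<gamma>\<^sup>2"
  define D where "D = x * \<beta> + y * \<alpha> - 2 * z * \<gamma>"
  define w where "w = x * y - z\<^sup>2"
  define t where "t = - x / \<alpha>"
  have xt: "x + t * \<alpha> = 0" using assms(1) unfolding t_def by simp
  have "w + t * D + t\<^sup>2 * u = (x + t * \<alpha>) * (y + t * \<beta>) - (z + t * \<gamma>)\<^sup>2"
    unfolding u_def D_def w_def by (simp add: algebra_simps power2_eq_square)
  also have "\<dots> = - (z + t * \<gamma>)\<^sup>2" unfolding xt by simp
  finally have "w + t * D + t\<^sup>2 * u \<le> 0" by simp
  moreover have "u \<ge> 0" using assms unfolding u_def by simp
  ultimately have "4 * u * (w + t * D + t\<^sup>2 * u) \<le> 0"
    by (simp add: mult_nonneg_nonpos)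
  moreover have "4 * u * (w + t * D + t\<^sup>2 * u) = (2 * u * t + D)\<^sup>2 - (D\<^sup>2 - 4 * u * w)"
    by (simp add: algebra_simps power2_eq_square)
  ultimately have "(2 * u * t + D)\<^sup>2 \<le> D\<^sup>2 - 4 * u * w" by linarith
  then have "4 * u * w \<le> D\<^sup>2" by (smt (verit) zero_le_power2)
  then show ?thesis unfolding u_def D_def w_def .
qed

lemma tri_area_nonneg: "0 \<le> tri_area P T j"
  unfolding tri_area_def by simp

lemma tri_area_le_half_frob_vgrad:
  assumes "tri_jac P T j \<noteq> 0"
  shows "tri_area P' T j \<le> tri_area P T j * (frob (vgrad P T j P') (vgrad P T j P') / 2)"
proof -
  define a where "a = tri_edge P T j 1"
  define b where "b = tri_edge P T j 2"
  define A where "A = tri_edge P' T j 1"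
  define B where "B = tri_edge P' T j 2"
  define L where "L = norm (tri_jac P T j)"
  define F where "F = frob (vgrad P T j P') (vgrad P T j P')"
  define D where "D = (A \<bullet> A) * (b \<bullet> b) + (B \<bullet> B) * (a \<bullet> a) - 2 * (A \<bullet> B) * (a \<bullet> b)"
  have L_pos: "L > 0" using assms unfolding L_def by simp
  have D_eq: "D = L\<^sup>2 * F"
    unfolding D_def L_def F_def frob_vgrad_vgrad[OF assms] A_def B_def a_def b_def
    by (simp add: inner_commute)
  have "0 \<le> D" unfolding D_eq F_def by (simp add: frob_self_nonneg)
  have LL: "L\<^sup>2 = (a \<bullet> a) * (b \<bullet> b) - (a \<bullet> b)\<^sup>2"
    unfolding L_def norm_tri_jac_sq a_def b_def ..
  have AB: "(norm (tri_jac P' T j))\<^sup>2 = (A \<bullet> A) * (B \<bullet> B) - (A \<bullet> B)\<^sup>2"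
    unfolding norm_tri_jac_sq A_def B_def ..
  have "a \<noteq> 0" using assms unfolding tri_jac_eq_cross3_edges a_def by auto
  then have "a \<bullet> a > 0" by simp
  moreover have "(a \<bullet> b)\<^sup>2 \<le> (a \<bullet> a) * (b \<bullet> b)" using LL by (smt (verit) zero_le_power2)
  ultimately have "4 * L\<^sup>2 * (norm (tri_jac P' T j))\<^sup>2 \<le> D\<^sup>2"
    unfolding LL AB D_def by (rule mixed_discriminant_le)
  then have "(2 * (L * norm (tri_jac P' T j)))\<^sup>2 \<le> D\<^sup>2" by (simp add: power_mult_distrib)
  then have "2 * (L * norm (tri_jac P' T j)) \<le> D" using \<open>0 \<le> D\<close> by (rule power2_le_imp_le)
  then have "L * (2 * norm (tri_jac P' T j)) \<le> L * (L * F)"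
    unfolding D_eq by (simp add: power2_eq_square mult_ac)
  then have "norm (tri_jac P' T j) / 2 \<le> L / 2 * (F / 2)"
    using L_pos by (simp add: field_simps)
  moreover have "tri_area P' T j = norm (tri_jac P' T j) / 2" "tri_area P T j = L / 2"
    unfolding tri_area_def L_def by simp_all
  ultimately show ?thesis unfolding F_def by (simp only:)
qed

lemma tri_area_le_frob_vgrad_displacement:
  fixes P P' :: "nat \<Rightarrow> real^3"
  assumes "tri_jac P T j \<noteq> 0"
  defines "G \<equiv> vgrad P T j P'" and "Q \<equiv> vgrad P T j P"
  shows "tri_area P' T j \<le> tri_area P T j * (1 + (frob G G - frob G Q))"
proof -
  have "0 \<le> frob (G - Q) (G - Q)" by (rule frob_self_nonneg)
  also have "\<dots> = frob G G - 2 * frob G Q + 2"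
    using frob_vgrad_identity[OF assms(1)] frob_commute[of G Q]
    unfolding Q_def[symmetric] frob_diff_left frob_diff_right by simp
  finally have "frob G G / 2 \<le> 1 + (frob G G - frob G Q)" by simp
  then have "tri_area P T j * (frob G G / 2) \<le> tri_area P T j * (1 + (frob G G - frob G Q))"
    by (rule mult_left_mono) (rule tri_area_nonneg)
  then show ?thesis
    using tri_area_le_half_frob_vgrad[OF assms(1), of P'] unfolding G_def by linarith
qed

lemma ip_s_self_nonneg: "0 \<le> ip_s P T J u u"
  unfolding ip_s_def by (simp add: sum_nonneg tri_area_nonneg)

lemma willmore_eq_sum:
  "willmore P T J H = (1/3) * (\<Sum>j<J. \<Sum>k<3. tri_area P T j * (H (T j k))\<^sup>2 / 2)"
  unfolding willmore_def ip_s_def by (simp add: power2_eq_square flip: sum_divide_distrib)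

lemma weighted_half_sq_diff_le:
  fixes a a' g h h' :: real
  assumes "a' \<le> a * (1 + g)" "0 \<le> a"
  shows "a' * h'\<^sup>2 / 2 - a * h\<^sup>2 / 2 \<le> a * ((h' - h) * h') + a * (h'\<^sup>2 / 2 * g)"
proof -
  have "a' * h'\<^sup>2 \<le> a * (1 + g) * h'\<^sup>2" using assms(1) by (simp add: mult_right_mono)
  moreover have "0 \<le> a * (h' - h)\<^sup>2" using assms(2) by simp
  ultimately show ?thesis by (simp add: algebra_simps power2_eq_square)
qed

(* One step of the scheme, with P, P', V, H, H', w standing for X^m, X^{m+1}, V^{m+1}, H^m,
   H^{m+1}, w^m. *)
definition willmore_flow_step ::
    "real \<Rightarrow> (nat \<Rightarrow> nat \<Rightarrow> nat) \<Rightarrow> nat \<Rightarrow> (nat \<Rightarrow> real^3) \<Rightarrow> (nat \<Rightarrow> real^3) \<Rightarrow> (nat \<Rightarrow> real^3)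
      \<Rightarrow> (nat \<Rightarrow> real) \<Rightarrow> (nat \<Rightarrow> real) \<Rightarrow> (nat \<Rightarrow> real) \<Rightarrow> bool" where
  "willmore_flow_step \<tau> T J w P P' V H H' \<longleftrightarrow>
    (\<forall>\<phi>. ip_s P T J
        (\<lambda>j k. ((1/\<tau>) *\<^sub>R (P' (T j k) - P (T j k))) \<bullet> tri_normal P T j) (\<lambda>j k. \<phi> (T j k))
      = ip_s P T J (\<lambda>j k. V (T j k)) (\<lambda>j k. \<phi> (T j k))) \<and>
    (\<forall>\<omega>. ip_v P T J (\<lambda>j k. V (T j k) *\<^sub>R tri_normal P T j) (\<lambda>j k. \<omega> (T j k))
      = ip_m P T J
        (\<lambda>j k. H' (T j k) *\<^sub>R vgrad P T j w
               - outer (tri_normal P T j) (sgrad P T j H')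
               - ((1/2) * (H' (T j k))\<^sup>2) *\<^sub>R vgrad P T j P')
        (\<lambda>j k. vgrad P T j \<omega>)) \<and>
    (\<forall>\<phi>. ip_s P T J (\<lambda>j k. H' (T j k) - H (T j k)) (\<lambda>j k. \<phi> (T j k))
      = ip_m P T J
        (\<lambda>j k. vgrad P T j (\<lambda>i. P' i - P i))
        (\<lambda>j k. outer (tri_normal P T j) (sgrad P T j \<phi>) - \<phi> (T j k) *\<^sub>R vgrad P T j w))"

lemma willmore_flow_step_energy_identity:
  fixes P P' :: "nat \<Rightarrow> real^3"
  assumes "\<tau> \<noteq> 0" and step: "willmore_flow_step \<tau> T J w P P' V H H'"
  defines "G \<equiv> \<lambda>j. vgrad P T j P'" and "Q \<equiv> \<lambda>j. vgrad P T j P"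
  shows "\<tau> * ip_s P T J (\<lambda>j k. V (T j k)) (\<lambda>j k. V (T j k))
       + ip_s P T J (\<lambda>j k. H' (T j k) - H (T j k)) (\<lambda>j k. H' (T j k))
     = - ip_s P T J (\<lambda>j k. (H' (T j k))\<^sup>2 / 2) (\<lambda>j k. frob (G j) (G j) - frob (G j) (Q j))"
proof -
  define n where "n = (\<lambda>j. tri_normal P T j)"
  define d where "d = (\<lambda>i. P' i - P i)"
  define U where "U = (\<lambda>j k. H' (T j k) *\<^sub>R vgrad P T j w - outer (n j) (sgrad P T j H'))"
  have eq1: "ip_s P T J (\<lambda>j k. ((1/\<tau>) *\<^sub>R d (T j k)) \<bullet> n j) (\<lambda>j k. V (T j k))
      = ip_s P T J (\<lambda>j k. V (T j k)) (\<lambda>j k. V (T j k))"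
    using step[unfolded willmore_flow_step_def, THEN conjunct1, THEN spec, of V]
    unfolding d_def n_def .
  have "\<tau> * ip_s P T J (\<lambda>j k. V (T j k)) (\<lambda>j k. V (T j k))
      = ip_v P T J (\<lambda>j k. V (T j k) *\<^sub>R n j) (\<lambda>j k. d (T j k))"
    unfolding eq1[symmetric] unfolding ip_s_def ip_v_def sum_distrib_left
    using \<open>\<tau> \<noteq> 0\<close> by (simp add: inner_commute mult.commute)
  also have "\<dots> = ip_m P T J (\<lambda>j k. U j k - ((1/2) * (H' (T j k))\<^sup>2) *\<^sub>R G j) (\<lambda>j k. G j - Q j)"
    using step[unfolded willmore_flow_step_def, THEN conjunct2, THEN conjunct1, THEN spec, of d]
    unfolding d_def n_def U_def G_def Q_def vgrad_diff by simp
  finally have tested_V: "\<tau> * ip_s P T J (\<lambda>j k. V (T j k)) (\<lambda>j k. V (T j k))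
      = ip_m P T J (\<lambda>j k. U j k - ((1/2) * (H' (T j k))\<^sup>2) *\<^sub>R G j) (\<lambda>j k. G j - Q j)" .
  have tested_H: "ip_s P T J (\<lambda>j k. H' (T j k) - H (T j k)) (\<lambda>j k. H' (T j k))
      = ip_m P T J (\<lambda>j k. G j - Q j) (\<lambda>j k. - U j k)"
    using step[unfolded willmore_flow_step_def, THEN conjunct2, THEN conjunct2, THEN spec, of H']
    unfolding n_def U_def G_def Q_def vgrad_diff by simp
  \<comment> \<open>This is where the terms with A^m and the gradient of H^{m+1}, collected in U, drop out.\<close>
  have cancel: "frob (U - c *\<^sub>R G) (G - Q) + frob (G - Q) (- U) = - (c * (frob G G - frob G Q))"
    for U G Q :: "real^3^3" and c
    using frob_commute[of U]
    by (simp add: frob_diff_left frob_diff_right frob_minus_right frob_scaleR_left algebra_simps)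
  have "ip_m P T J (\<lambda>j k. U j k - ((1/2) * (H' (T j k))\<^sup>2) *\<^sub>R G j) (\<lambda>j k. G j - Q j)
      + ip_m P T J (\<lambda>j k. G j - Q j) (\<lambda>j k. - U j k)
    = (1/3) * (\<Sum>j<J. \<Sum>k<3. tri_area P T j *
        (frob (U j k - ((1/2) * (H' (T j k))\<^sup>2) *\<^sub>R G j) (G j - Q j) + frob (G j - Q j) (- U j k)))"
    unfolding ip_m_def by (simp add: sum.distrib distrib_left)
  also have "\<dots> = - ip_s P T J (\<lambda>j k. (H' (T j k))\<^sup>2 / 2) (\<lambda>j k. frob (G j) (G j) - frob (G j) (Q j))"
    unfolding ip_s_def cancel by (simp add: sum_negf)
  finally show ?thesis unfolding tested_V tested_H .
qed

lemma willmore_flow_step_energy_decay: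
  fixes P P' :: "nat \<Rightarrow> real^3"
  assumes "\<tau> > 0" and jac: "\<And>j. j < J \<Longrightarrow> tri_jac P T j \<noteq> 0"
    and step: "willmore_flow_step \<tau> T J w P P' V H H'"
  shows "willmore P' T J H' \<le> willmore P T J H"
proof -
  define g where "g = (\<lambda>j. frob (vgrad P T j P') (vgrad P T j P') - frob (vgrad P T j P') (vgrad P T j P))"
  have pointwise: "tri_area P' T j * (H' (T j k))\<^sup>2 / 2 - tri_area P T j * (H (T j k))\<^sup>2 / 2
      \<le> tri_area P T j * ((H' (T j k) - H (T j k)) * H' (T j k))
        + tri_area P T j * ((H' (T j k))\<^sup>2 / 2 * g j)" if "j < J" for j k
    using weighted_half_sq_diff_le[OF tri_area_le_frob_vgrad_displacement[OF jac[OF that]] tri_area_nonneg]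
    unfolding g_def by (simp add: add.assoc)
  have "willmore P' T J H' - willmore P T J H
      = (1/3) * (\<Sum>j<J. \<Sum>k<3. tri_area P' T j * (H' (T j k))\<^sup>2 / 2 - tri_area P T j * (H (T j k))\<^sup>2 / 2)"
    unfolding willmore_eq_sum by (simp add: sum_subtractf right_diff_distrib)
  also have "\<dots> \<le> (1/3) * (\<Sum>j<J. \<Sum>k<3. tri_area P T j * ((H' (T j k) - H (T j k)) * H' (T j k))
        + tri_area P T j * ((H' (T j k))\<^sup>2 / 2 * g j))"
    using pointwise by (intro mult_left_mono sum_mono) auto
  also have "\<dots> = ip_s P T J (\<lambda>j k. H' (T j k) - H (T j k)) (\<lambda>j k. H' (T j k))
      + ip_s P T J (\<lambda>j k. (H' (T j k))\<^sup>2 / 2) (\<lambda>j k. g j)"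
    unfolding ip_s_def by (simp add: sum.distrib distrib_left)
  also have "\<dots> = - (\<tau> * ip_s P T J (\<lambda>j k. V (T j k)) (\<lambda>j k. V (T j k)))"
    using willmore_flow_step_energy_identity[OF _ step] \<open>\<tau> > 0\<close> unfolding g_def by force
  also have "\<dots> \<le> 0" using \<open>\<tau> > 0\<close> ip_s_self_nonneg by simp
  finally show ?thesis by simp
qed

theorem theorem3p1:
  fixes \<tau> :: real and N J :: nat and T :: "nat \<Rightarrow> nat \<Rightarrow> nat"
    and X :: "nat \<Rightarrow> nat \<Rightarrow> real^3"
    and V H :: "nat \<Rightarrow> nat \<Rightarrow> real"
    and w :: "nat \<Rightarrow> nat \<Rightarrow> real^3"
  assumes tau: "\<tau> > 0"
    and surf0: "closed_polyhedral_surface N J T (X 0)"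
    and surf: "\<And>m. polyhedral_surface N J T (X (Suc m))"
    and wunit: "\<And>m i. i < N \<Longrightarrow> norm (w m i) = 1"
    and eq1: "\<And>m \<phi>. ip_s (X m) T J
        (\<lambda>j k. ((1/\<tau>) *\<^sub>R (X (Suc m) (T j k) - X m (T j k))) \<bullet> tri_normal (X m) T j)
        (\<lambda>j k. \<phi> (T j k))
      = ip_s (X m) T J (\<lambda>j k. V (Suc m) (T j k)) (\<lambda>j k. \<phi> (T j k))"
    and eq2: "\<And>m \<omega>. ip_v (X m) T J
        (\<lambda>j k. V (Suc m) (T j k) *\<^sub>R tri_normal (X m) T j)
        (\<lambda>j k. \<omega> (T j k))
      = ip_m (X m) T J
        (\<lambda>j k. H (Suc m) (T j k) *\<^sub>R vgrad (X m) T j (w m)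
               - outer (tri_normal (X m) T j) (sgrad (X m) T j (H (Suc m)))
               - ((1/2) * (H (Suc m) (T j k))\<^sup>2) *\<^sub>R vgrad (X m) T j (X (Suc m)))
        (\<lambda>j k. vgrad (X m) T j \<omega>)"
    and eq3: "\<And>m \<phi>. ip_s (X m) T J
        (\<lambda>j k. H (Suc m) (T j k) - H m (T j k))
        (\<lambda>j k. \<phi> (T j k))
      = ip_m (X m) T J
        (\<lambda>j k. vgrad (X m) T j (\<lambda>i. X (Suc m) i - X m i))
        (\<lambda>j k. outer (tri_normal (X m) T j) (sgrad (X m) T j \<phi>)
               - \<phi> (T j k) *\<^sub>R vgrad (X m) T j (w m))"
  shows "\<forall>m. willmore (X (Suc m)) T J (H (Suc m)) \<le> willmore (X m) T J (H m)
             \<and> willmore (X m) T J (H m) \<le> willmore (X 0) T J (H 0)"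
proof -
  have surface: "polyhedral_surface N J T (X m)" for m
    using surf0 surf by (cases m) (auto simp: closed_polyhedral_surface_def)
  have step: "willmore (X (Suc m)) T J (H (Suc m)) \<le> willmore (X m) T J (H m)" for m
  proof (rule willmore_flow_step_energy_decay[OF tau])
    show "tri_jac (X m) T j \<noteq> 0" if "j < J" for j
      using surface[of m] that unfolding polyhedral_surface_def by blast
    show "willmore_flow_step \<tau> T J (w m) (X m) (X (Suc m)) (V (Suc m)) (H m) (H (Suc m))"
      unfolding willmore_flow_step_def using eq1 eq2 eq3 by blast
  qed
  have "willmore (X m) T J (H m) \<le> willmore (X 0) T J (H 0)" for m
    by (induction m) (auto intro: order_trans[OF step])
  then show ?thesis using step by blast
qed

end
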